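(* Let $G$ be a $2$-connected finite simple graph. Then $\mathrm{nRel}(G;p)$ is concave down for $p\in(0,1)$ sufficiently close to $1$; that is, there is $\varepsilon>0$ such that $\frac{d^2}{dp^2}\mathrm{nRel}(G;p)<0$ for all $p\in(1-\varepsilon,1)$.
   Context: For a graph $G$ on $n$ vertices, a connected set is a nonempty vertex subset $C$ such that the induced subgraph $G[C]$ is connected. The node reliability of $G$ is the polynomial \[ \mathrm{nRel}(G;p)=\sum_{C}p^{|C|}(1-p)^{n-|C|}, \] the sum over all connected sets $C$ of $G$. *)

theory Defs
  imports "HOL-Analysis.Analysis"
begin

definition simple_graph :: "'a set \<Rightarrow> ('a \<Rightarrow> 'a \<Rightarrow> bool) \<Rightarrow> bool" where
  "simple_graph V E \<longleftrightarrow> finite V \<and> (\<forall>x y. E x y \<longrightarrow> x \<in> V \<and> y \<in> V)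
     \<and> (\<forall>x y. E x y \<longrightarrow> E y x) \<and> (\<forall>x. \<not> E x x)"

definition connected_set :: "'a set \<Rightarrow> ('a \<Rightarrow> 'a \<Rightarrow> bool) \<Rightarrow> 'a set \<Rightarrow> bool" where
  "connected_set V E C \<longleftrightarrow> C \<noteq> {} \<and> C \<subseteq> V \<and>
     (\<forall>x\<in>C. \<forall>y\<in>C. (\<lambda>a b. E a b \<and> a \<in> C \<and> b \<in> C)\<^sup>*\<^sup>* x y)"

definition two_connected :: "'a set \<Rightarrow> ('a \<Rightarrow> 'a \<Rightarrow> bool) \<Rightarrow> bool" where
  "two_connected V E \<longleftrightarrow> card V \<ge> 3 \<and> connected_set V E V \<and>
     (\<forall>v\<in>V. connected_set V E (V - {v}))"

definition nRel :: "'a set \<Rightarrow> ('a \<Rightarrow> 'a \<Rightarrow> bool) \<Rightarrow> real \<Rightarrow> real" where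
  "nRel V E p = (\<Sum>C\<in>{C. connected_set V E C}. p ^ card C * (1 - p) ^ (card V - card C))"

end

theory Submission
  imports Defs
begin

text \<open>Write \<open>q = 1 - p\<close> and \<open>n = |V|\<close>. Since the weights \<open>p^|S| q^(n-|S|)\<close> of all subsets
  \<open>S \<subseteq> V\<close> sum to 1, the node reliability is 1 minus the total weight of the disconnected
  subsets. In a 2-connected graph every disconnected subset misses at least two vertices, and
  for \<open>b \<ge> 2\<close> the second derivative of \<open>p^a q^b\<close> is \<open>q^(b-2)\<close> times
  \<open>a(a-1) p^(a-2) q^2 - 2ab p^(a-1) q + b(b-1) p^a\<close>, which is positive as soon as \<open>2nq < p\<close>.
  So near \<open>p = 1\<close> every subtracted weight is strictly convex, and there is at least one,
  namely that of the empty set.\<close>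

definition bernstein_term :: "nat \<Rightarrow> nat \<Rightarrow> real \<Rightarrow> real" where
  "bernstein_term a b p = p ^ a * (1 - p) ^ b"

text \<open>Truncated subtraction in the exponents is harmless: each such exponent is multiplied
  by a coefficient that vanishes whenever the subtraction truncates.\<close>
definition bernstein_term_deriv :: "nat \<Rightarrow> nat \<Rightarrow> real \<Rightarrow> real" where
  "bernstein_term_deriv a b p =
     real a * p ^ (a - 1) * (1 - p) ^ b - real b * p ^ a * (1 - p) ^ (b - 1)"

definition bernstein_term_deriv2 :: "nat \<Rightarrow> nat \<Rightarrow> real \<Rightarrow> real" where
  "bernstein_term_deriv2 a b p =
     real a * real (a - 1) * p ^ (a - 2) * (1 - p) ^ b
     - 2 * real a * real b * p ^ (a - 1) * (1 - p) ^ (b - 1)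
     + real b * real (b - 1) * p ^ a * (1 - p) ^ (b - 2)"

lemma has_real_derivative_one_minus_power:
  "((\<lambda>p::real. (1 - p) ^ b) has_real_derivative - (real b * (1 - p) ^ (b - 1))) (at p)"
proof -
  have "((\<lambda>p::real. 1 - p) has_real_derivative -1) (at p)"
    by (auto intro!: derivative_eq_intros)
  from DERIV_power[OF this, of b] show ?thesis by simp
qed

lemma has_real_derivative_pow_times_one_minus_pow:
  "((\<lambda>p::real. p ^ a * (1 - p) ^ b) has_real_derivative
     real a * p ^ (a - 1) * (1 - p) ^ b - real b * p ^ a * (1 - p) ^ (b - 1)) (at p)"
  using DERIV_mult'[OF DERIV_pow has_real_derivative_one_minus_power]
  by (simp add: algebra_simps)

lemma bernstein_term_has_derivative:
  "(bernstein_term a b has_real_derivative bernstein_term_deriv a b p) (at p)"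
  using has_real_derivative_pow_times_one_minus_pow
  unfolding bernstein_term_def[abs_def] bernstein_term_deriv_def .

lemma bernstein_term_deriv_has_derivative:
  "(bernstein_term_deriv a b has_real_derivative bernstein_term_deriv2 a b p) (at p)"
proof -
  have "((\<lambda>p. real a * (p ^ (a - 1) * (1 - p) ^ b) - real b * (p ^ a * (1 - p) ^ (b - 1)))
     has_real_derivative
       real a * (real (a - 1) * p ^ (a - 1 - 1) * (1 - p) ^ b - real b * p ^ (a - 1) * (1 - p) ^ (b - 1))
     - real b * (real a * p ^ (a - 1) * (1 - p) ^ (b - 1) - real (b - 1) * p ^ a * (1 - p) ^ (b - 1 - 1)))
     (at p)"
    by (intro DERIV_diff DERIV_cmult has_real_derivative_pow_times_one_minus_pow)
  then show ?thesis
    unfolding bernstein_term_deriv_def[abs_def] bernstein_term_deriv2_def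
    by (simp add: algebra_simps numeral_2_eq_2)
qed

lemma bernstein_term_deriv2_pos:
  assumes "2 \<le> b" and "0 < p" and "p < 1" and "2 * real a * (1 - p) < real (b - 1) * p"
  shows "0 < bernstein_term_deriv2 a b p"
proof -
  define q where "q = 1 - p"
  have q: "0 < q" using assms(3) by (simp add: q_def)
  obtain c where b: "b = c + 2" using assms(1) by (metis le_add_diff_inverse2)
  have factored: "bernstein_term_deriv2 a b p = q ^ c * (real a * real (a - 1) * p ^ (a - 2) * q\<^sup>2
      - 2 * real a * real b * p ^ (a - 1) * q + real b * real (b - 1) * p ^ a)"
    unfolding bernstein_term_deriv2_def q_def[symmetric] b
    by (simp add: power_add power2_eq_square algebra_simps)
  have dominant: "2 * real a * real b * p ^ (a - 1) * q < real b * real (b - 1) * p ^ a"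
  proof (cases "a = 0")
    case True
    then show ?thesis using assms by simp
  next
    case False
    then have "p ^ a = p ^ (a - 1) * p" by (simp add: power_eq_if)
    moreover have "0 < real b * p ^ (a - 1)" using assms by simp
    then have "real b * p ^ (a - 1) * (2 * real a * q) < real b * p ^ (a - 1) * (real (b - 1) * p)"
      using assms(4) by (intro mult_strict_left_mono) (simp_all add: q_def)
    ultimately show ?thesis by (simp add: algebra_simps)
  qed
  have "0 \<le> real a * real (a - 1) * p ^ (a - 2) * q\<^sup>2" using assms by simp
  with dominant q show ?thesis unfolding factored by simp
qed

lemma sum_bernstein_term_Pow:
  assumes "finite V"
  shows "(\<Sum>S\<in>Pow V. bernstein_term (card S) (card V - card S) p) = 1"
proof -
  have "(\<Sum>S\<in>Pow V. bernstein_term (card S) (card V - card S) p)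
      = (\<Sum>S\<in>Pow V. (\<Prod>x\<in>S. p) * (\<Prod>x\<in>V - S. 1 - p))"
    using assms by (intro sum.cong) (auto simp: bernstein_term_def card_Diff_subset finite_subset)
  also have "\<dots> = (\<Prod>x\<in>V. p + (1 - p))"
    by (rule prod_add[OF assms, symmetric])
  finally show ?thesis by simp
qed

lemma nRel_eq_one_minus_disconnected:
  assumes "finite V"
  shows "nRel V E = (\<lambda>p. 1 - (\<Sum>S\<in>{S\<in>Pow V. \<not> connected_set V E S}.
                          bernstein_term (card S) (card V - card S) p))"
proof
  fix p
  let ?w = "\<lambda>S. bernstein_term (card S) (card V - card S) p"
  have "Pow V = {C. connected_set V E C} \<union> {S\<in>Pow V. \<not> connected_set V E S}"
    by (auto simp: connected_set_def)
  then have "1 = (\<Sum>S\<in>{C. connected_set V E C}. ?w S) + (\<Sum>S\<in>{S\<in>Pow V. \<not> connected_set V E S}. ?w S)"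
    using sum_bernstein_term_Pow[OF assms, of p] assms
    by (metis (no_types, lifting) disjoint_iff finite_Pow_iff finite_Un mem_Collect_eq
        sum.union_disjoint)
  then show "nRel V E p = 1 - (\<Sum>S\<in>{S\<in>Pow V. \<not> connected_set V E S}. ?w S)"
    unfolding nRel_def bernstein_term_def by simp
qed

lemma deriv2_nRel:
  assumes "finite V"
  shows "deriv (deriv (nRel V E)) p = - (\<Sum>S\<in>{S\<in>Pow V. \<not> connected_set V E S}.
                                         bernstein_term_deriv2 (card S) (card V - card S) p)"
proof -
  let ?N = "{S\<in>Pow V. \<not> connected_set V E S}"
  have "deriv (nRel V E) = (\<lambda>p. - (\<Sum>S\<in>?N. bernstein_term_deriv (card S) (card V - card S) p))"
  proof
    fix p
    show "deriv (nRel V E) p = - (\<Sum>S\<in>?N. bernstein_term_deriv (card S) (card V - card S) p)"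
      unfolding nRel_eq_one_minus_disconnected[OF assms]
      by (intro DERIV_imp_deriv) (auto intro!: derivative_eq_intros bernstein_term_has_derivative)
  qed
  then show ?thesis
    by (auto intro!: DERIV_imp_deriv derivative_eq_intros bernstein_term_deriv_has_derivative)
qed

lemma two_connected_finite: "two_connected V E \<Longrightarrow> finite V"
  unfolding two_connected_def by (metis card.infinite not_numeral_le_zero)

lemma two_connected_disconnected_misses_two:
  assumes "two_connected V E" and "S \<subseteq> V" and "\<not> connected_set V E S"
  shows "2 \<le> card V - card S"
proof (rule ccontr)
  assume "\<not> 2 \<le> card V - card S"
  moreover have "finite V" using assms(1) by (rule two_connected_finite)
  ultimately have "card (V - S) \<le> 1" using assms(2) by (simp add: card_Diff_subset finite_subset)
  then have "S = V \<or> (\<exists>v\<in>V. S = V - {v})"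
    using assms(2) \<open>finite V\<close> by (auto simp: card_le_Suc0_iff_eq)
  then show False using assms unfolding two_connected_def by auto
qed

theorem lemma3p3:
  fixes V :: "'a set" and E :: "'a \<Rightarrow> 'a \<Rightarrow> bool"
  assumes "simple_graph V E" and "two_connected V E"
  shows "\<exists>\<epsilon>>0. \<forall>p. 1 - \<epsilon> < p \<and> p < 1 \<longrightarrow> deriv (deriv (nRel V E)) p < 0"
proof (intro exI[of _ "1 / (2 * real (card V) + 1)"] conjI allI impI)
  let ?N = "{S\<in>Pow V. \<not> connected_set V E S}"
  have fin: "finite V" using assms(2) by (rule two_connected_finite)
  show "0 < 1 / (2 * real (card V) + 1)" by simp
  fix p assume p: "1 - 1 / (2 * real (card V) + 1) < p \<and> p < 1"
  have "1 / (2 * real (card V) + 1) \<le> 1" by simp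
  with p have "0 < p" by linarith
  from p have "(2 * real (card V) + 1) * (1 - p) < 1" by (simp add: field_simps)
  then have near_one: "2 * real (card V) * (1 - p) < p" by (simp add: algebra_simps)
  have deriv2_pos: "0 < bernstein_term_deriv2 (card S) (card V - card S) p" if "S \<in> ?N" for S
  proof (rule bernstein_term_deriv2_pos)
    show two: "2 \<le> card V - card S"
      using two_connected_disconnected_misses_two[OF assms(2)] that by simp
    have "2 * real (card S) * (1 - p) \<le> 2 * real (card V) * (1 - p)"
      using card_mono[OF fin] that p by (intro mult_right_mono) auto
    also have "\<dots> < p" by (rule near_one)
    also have "\<dots> \<le> real (card V - card S - 1) * p"
      using two \<open>0 < p\<close> by (simp add: mult_le_cancel_right1)
    finally show "2 * real (card S) * (1 - p) < real (card V - card S - 1) * p" .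
  qed (use p \<open>0 < p\<close> in auto)
  have "{} \<in> ?N" by (simp add: connected_set_def)
  have "0 < (\<Sum>S\<in>?N. bernstein_term_deriv2 (card S) (card V - card S) p)"
    using fin deriv2_pos \<open>{} \<in> ?N\<close> by (intro sum_pos) auto
  then show "deriv (deriv (nRel V E)) p < 0" unfolding deriv2_nRel[OF fin] by simp
qed

end
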